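(* Let $G$ be a finite simple graph and let $1\le k<\nu(G)$. If $I(G)^{[k]}$ is linearly related, then $I(G)^{[k+1]}$ is linearly related.
   Context: $G$ is a finite simple graph on vertex set $\{x_1,\ldots,x_n\}$ identified with the variables of $S=K[x_1,\ldots,x_n]$ ($K$ a field); edges are identified with degree-2 monomials. $I(G)^{[k]}$ (the $k$th squarefree power of the edge ideal) is generated by all products $e_1\cdots e_k$ over $k$-matchings $\{e_1,\ldots,e_k\}$ of $G$; it is generated in degree $2k$. $\nu(G)$ is the matching number. A graded ideal $I$ generated in a single degree $d$ is linearly related if its first syzygy module is generated by linear relations, i.e. $\dim_K\operatorname{Tor}_1^S(I,K)_j=0$ for all $j\neq d+1$. *)

theory Defs
  imports Main "HOL-Library.Poly_Mapping"
begin

(* Polynomial ring S = K[x_v : v vertex]: polynomials are finitely supported maps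
  from monomials (exponent vectors 'a <Rightarrow><^sub>0 nat) to coefficients in K. *)

type_synonym ('a, 'k) poly = "('a \<Rightarrow>\<^sub>0 nat) \<Rightarrow>\<^sub>0 'k"

definition simple_graph :: "'a set set \<Rightarrow> bool" where
  "simple_graph E \<longleftrightarrow> finite E \<and> (\<forall>e\<in>E. card e = 2)"

definition matching :: "'a set set \<Rightarrow> 'a set set \<Rightarrow> bool" where
  "matching E M \<longleftrightarrow> M \<subseteq> E \<and> (\<forall>e\<in>M. \<forall>f\<in>M. e \<noteq> f \<longrightarrow> e \<inter> f = {})"

definition matching_number :: "'a set set \<Rightarrow> nat" where
  "matching_number E = Max {card M | M. matching E M}"

(* Exponent vector of the squarefree monomial prod_{x in A} x. *)
definition vexp :: "'a set \<Rightarrow> ('a \<Rightarrow>\<^sub>0 nat)" where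
  "vexp A = (\<Sum>x\<in>A. Poly_Mapping.single x 1)"

definition monom :: "('a \<Rightarrow>\<^sub>0 nat) \<Rightarrow> ('a, 'k::comm_ring_1) poly" where
  "monom m = Poly_Mapping.single m 1"

(* Exponent vectors of the generators e_1 <cdots> e_k of I(G)^[k], over all k-matchings. *)
definition sqf_power_gens :: "'a set set \<Rightarrow> nat \<Rightarrow> ('a \<Rightarrow>\<^sub>0 nat) set" where
  "sqf_power_gens E k = {(\<Sum>e\<in>M. vexp e) | M. matching E M \<and> card M = k}"

definition mdeg :: "('a \<Rightarrow>\<^sub>0 nat) \<Rightarrow> nat" where
  "mdeg m = (\<Sum>x\<in>Poly_Mapping.keys m. Poly_Mapping.lookup m x)"

definition syzygies :: "('a \<Rightarrow>\<^sub>0 nat) set \<Rightarrow> (('a \<Rightarrow>\<^sub>0 nat) \<Rightarrow> ('a, 'k::field) poly) set" where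
  "syzygies U = {\<sigma>. (\<forall>u. u \<notin> U \<longrightarrow> \<sigma> u = 0) \<and> (\<Sum>u\<in>U. \<sigma> u * monom u) = 0}"

definition linear_syzygies :: "('a \<Rightarrow>\<^sub>0 nat) set \<Rightarrow> (('a \<Rightarrow>\<^sub>0 nat) \<Rightarrow> ('a, 'k::field) poly) set" where
  "linear_syzygies U = {\<sigma> \<in> syzygies U. \<forall>u. \<forall>m\<in>Poly_Mapping.keys (\<sigma> u). mdeg m = 1}"

(* The ideal generated by the monomials U (all of the same degree d, hence a minimal
  generating set) is linearly related: its first syzygy module is generated, as an S-module,
  by linear relations. *)
definition linearly_related :: "('a \<Rightarrow>\<^sub>0 nat) set \<Rightarrow> 'k::field itself \<Rightarrow> bool" where
  "linearly_related U K \<longleftrightarrow>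
     (\<forall>\<sigma> \<in> (syzygies U :: (('a \<Rightarrow>\<^sub>0 nat) \<Rightarrow> ('a, 'k) poly) set).
        \<exists>n (c :: nat \<Rightarrow> ('a, 'k) poly) \<tau>.
          (\<forall>i<n. \<tau> i \<in> linear_syzygies U) \<and> (\<forall>u. \<sigma> u = (\<Sum>i<n. c i * \<tau> i u)))"

end

theory Submission
  imports Defs
begin

text \<open>A monomial ideal generated by monomials \<open>U\<close> of degree \<open>d\<close> is linearly related iff for every
  monomial \<open>c\<close> the generators dividing \<open>c\<close> are connected, two generators being adjacent when
  their lcm has degree \<open>d + 1\<close> and divides \<open>c\<close>: the binomial syzygy \<open>x^(c-u) e\<^sub>u - x^(c-v) e\<^sub>v\<close>
  is the sum of linear ones along a path, while no combination of linear syzygies has nonzero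
  coefficient sum in multidegree \<open>c\<close> over a connected component.

  For the squarefree power \<open>I(G)^[k]\<close> this says that the vertex sets of any two \<open>k\<close>-matchings \<open>S\<close>
  and \<open>T\<close> are joined inside \<open>S \<union> T\<close> by vertex sets of \<open>k\<close>-matchings, each obtained from the previous
  one by exchanging a single vertex. This property lifts from \<open>k\<close> to \<open>k + 1\<close>: two
  \<open>(k+1)\<close>-matchings sharing an edge are connected by deleting it, and any two can be linked through a
  third that shares an edge with each.\<close>

definition mdvd :: "('a \<Rightarrow>\<^sub>0 nat) \<Rightarrow> ('a \<Rightarrow>\<^sub>0 nat) \<Rightarrow> bool" where
  "mdvd m n \<longleftrightarrow> (\<forall>x. Poly_Mapping.lookup m x \<le> Poly_Mapping.lookup n x)"

lemma mdvd_trans: "mdvd a b \<Longrightarrow> mdvd b c \<Longrightarrow> mdvd a c"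
  unfolding mdvd_def using order_trans by blast

lemma mdvd_diff_add: "mdvd m n \<Longrightarrow> n - m + m = n"
  by (rule poly_mapping_eqI) (simp add: mdvd_def lookup_add lookup_minus)

lemma mdvd_add_left: "mdvd m (q + m)"
  by (simp add: mdvd_def lookup_add)

lemma mdvd_diff_self: "mdvd (n - m) n"
  by (simp add: mdvd_def lookup_minus)

lemma diff_add_diff: "mdvd y b \<Longrightarrow> mdvd b c \<Longrightarrow> (c - b) + (b - y) = c - y"
  by (rule poly_mapping_eqI) (simp add: mdvd_def lookup_add lookup_minus le_diff_conv2 add.commute)

lemma mdvd_diff_iff: "mdvd w a \<Longrightarrow> mdvd m a \<Longrightarrow> mdvd m (a - w) \<longleftrightarrow> mdvd w (a - m)"
  unfolding mdvd_def by (auto simp: lookup_minus) (metis le_diff_conv2 add.commute)+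

lemma poly_mapping_sum_single: "p = (\<Sum>m\<in>Poly_Mapping.keys p. Poly_Mapping.single m (Poly_Mapping.lookup p m))"
  by (rule poly_mapping_eqI) (simp add: lookup_sum lookup_single when_def sum.delta in_keys_iff)

lemma single_sum: "Poly_Mapping.single k (\<Sum>i\<in>A. f i) = (\<Sum>i\<in>A. Poly_Mapping.single k (f i))"
  by (induction A rule: infinite_finite_induct) (simp_all add: single_add)

lemma lookup_single_mult:
  "Poly_Mapping.lookup (Poly_Mapping.single m s * (p::('a,'k::comm_ring_1) poly)) x
   = (if mdvd m x then s * Poly_Mapping.lookup p (x - m) else 0)"
proof -
  have "Poly_Mapping.single m s * p
      = (\<Sum>q\<in>Poly_Mapping.keys p. Poly_Mapping.single (m + q) (s * Poly_Mapping.lookup p q))"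
    by (subst poly_mapping_sum_single[of p]) (simp add: sum_distrib_left mult_single)
  then have expand: "Poly_Mapping.lookup (Poly_Mapping.single m s * p) x =
      (\<Sum>q\<in>Poly_Mapping.keys p. if m + q = x then s * Poly_Mapping.lookup p q else 0)"
    by (simp add: lookup_sum lookup_single when_def)
  show ?thesis
  proof (cases "mdvd m x")
    case True
    then have "m + q = x \<longleftrightarrow> q = x - m" for q
      by (metis add.commute add_diff_cancel_right' mdvd_diff_add)
    then show ?thesis using True expand by (simp add: sum.delta in_keys_iff)
  next
    case False
    then have "m + q \<noteq> x" for q by (metis add.commute mdvd_add_left)
    then show ?thesis using False expand by simp
  qed
qed

lemma lookup_mult_monom:
  "Poly_Mapping.lookup ((p::('a,'k::comm_ring_1) poly) * monom m) x
   = (if mdvd m x then Poly_Mapping.lookup p (x - m) else 0)"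
  by (simp add: monom_def mult.commute[of p] lookup_single_mult)

lemma monom_mult: "(monom a :: ('a,'k::comm_ring_1) poly) * monom b = monom (a + b)"
  by (simp add: monom_def mult_single)

lemma keys_monom: "Poly_Mapping.keys (monom m :: ('a,'k::field) poly) = {m}"
  by (simp add: monom_def)

lemma mdeg_eq_sum_UNIV: "mdeg (m::'a::finite \<Rightarrow>\<^sub>0 nat) = (\<Sum>x\<in>UNIV. Poly_Mapping.lookup m x)"
  unfolding mdeg_def by (rule sum.mono_neutral_left) (auto simp: in_keys_iff)

lemma mdeg_add: "mdeg ((m::'a::finite \<Rightarrow>\<^sub>0 nat) + n) = mdeg m + mdeg n"
  by (simp add: mdeg_eq_sum_UNIV lookup_add sum.distrib)

lemma mdeg_mono: "mdvd m n \<Longrightarrow> mdeg (m::'a::finite \<Rightarrow>\<^sub>0 nat) \<le> mdeg n"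
  unfolding mdeg_eq_sum_UNIV mdvd_def by (rule sum_mono) auto

lemma mdeg_diff: "mdvd m n \<Longrightarrow> mdeg (n - m) = mdeg n - mdeg (m::'a::finite \<Rightarrow>\<^sub>0 nat)"
  by (metis add_diff_cancel_right' mdeg_add mdvd_diff_add)

definition linsyz_span :: "('a \<Rightarrow>\<^sub>0 nat) set \<Rightarrow> (('a \<Rightarrow>\<^sub>0 nat) \<Rightarrow> ('a, 'k::field) poly) set" where
  "linsyz_span U = {\<rho>. \<exists>n (c :: nat \<Rightarrow> ('a, 'k) poly) \<tau>.
     (\<forall>i<n. \<tau> i \<in> linear_syzygies U) \<and> (\<forall>u. \<rho> u = (\<Sum>i<n. c i * \<tau> i u))}"

lemma linearly_related_iff_syzygies_subset_span:
  "linearly_related U TYPE('k::field) \<longleftrightarrow>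
   (syzygies U :: (('a \<Rightarrow>\<^sub>0 nat) \<Rightarrow> ('a, 'k) poly) set) \<subseteq> linsyz_span U"
  unfolding linearly_related_def linsyz_span_def by blast

lemma linear_syzygy_in_span: "\<tau> \<in> linear_syzygies U \<Longrightarrow> \<tau> \<in> linsyz_span U"
  unfolding linsyz_span_def
  by (intro CollectI exI[of _ 1] exI[of _ "\<lambda>_. 1"] exI[of _ "\<lambda>_. \<tau>"]) simp

lemma zero_in_span: "(\<lambda>_. 0) \<in> linsyz_span U"
  unfolding linsyz_span_def by (intro CollectI exI[of _ 0]) simp

lemma add_in_span:
  assumes "\<rho>1 \<in> linsyz_span U" "\<rho>2 \<in> linsyz_span U"
  shows "(\<lambda>u. \<rho>1 u + \<rho>2 u) \<in> linsyz_span U"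
proof -
  obtain n1 :: nat and c1 \<tau>1 where 1: "\<forall>i<n1. \<tau>1 i \<in> linear_syzygies U" "\<forall>u. \<rho>1 u = (\<Sum>i<n1. c1 i * \<tau>1 i u)"
    using assms(1) unfolding linsyz_span_def by blast
  obtain n2 :: nat and c2 \<tau>2 where 2: "\<forall>i<n2. \<tau>2 i \<in> linear_syzygies U" "\<forall>u. \<rho>2 u = (\<Sum>i<n2. c2 i * \<tau>2 i u)"
    using assms(2) unfolding linsyz_span_def by blast
  define c where "c i = (if i < n1 then c1 i else c2 (i - n1))" for i
  define \<tau> where "\<tau> i = (if i < n1 then \<tau>1 i else \<tau>2 (i - n1))" for i
  have "\<forall>i<n1 + n2. \<tau> i \<in> linear_syzygies U" using 1 2 by (auto simp: \<tau>_def)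
  moreover have "\<rho>1 u + \<rho>2 u = (\<Sum>i<n1 + n2. c i * \<tau> i u)" for u
  proof -
    have split: "(\<Sum>i<n1 + m. f i) = (\<Sum>i<n1. f i) + (\<Sum>i<m. f (n1 + i))" for m and f :: "nat \<Rightarrow> ('a, 'b) poly"
      by (induction m) (simp_all add: add.assoc)
    have "(\<Sum>i<n1. c i * \<tau> i u) = (\<Sum>i<n1. c1 i * \<tau>1 i u)"
      by (rule sum.cong) (auto simp: c_def \<tau>_def)
    then show ?thesis using 1 2 by (simp add: split c_def \<tau>_def)
  qed
  ultimately show ?thesis unfolding linsyz_span_def by blast
qed

lemma mult_in_span:
  assumes "\<rho> \<in> linsyz_span U" shows "(\<lambda>u. p * \<rho> u) \<in> linsyz_span U"
proof -
  obtain n :: nat and c \<tau> where "\<forall>i<n. \<tau> i \<in> linear_syzygies U" "\<forall>u. \<rho> u = (\<Sum>i<n. c i * \<tau> i u)"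
    using assms unfolding linsyz_span_def by blast
  then show ?thesis unfolding linsyz_span_def
    by (intro CollectI exI[of _ n] exI[of _ "\<lambda>i. p * c i"] exI[of _ \<tau>]) (simp add: sum_distrib_left mult.assoc)
qed

lemma sum_in_span:
  "finite A \<Longrightarrow> (\<And>a. a \<in> A \<Longrightarrow> \<rho> a \<in> linsyz_span U) \<Longrightarrow> (\<lambda>u. \<Sum>a\<in>A. \<rho> a u) \<in> linsyz_span U"
  by (induction A rule: finite_induct) (auto simp: zero_in_span add_in_span)

definition binom_syz :: "('a \<Rightarrow>\<^sub>0 nat) \<Rightarrow> ('a \<Rightarrow>\<^sub>0 nat) \<Rightarrow> ('a \<Rightarrow>\<^sub>0 nat) \<Rightarrow> ('a \<Rightarrow>\<^sub>0 nat) \<Rightarrow> ('a, 'k::field) poly" where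
  "binom_syz c u v = (\<lambda>w. (if w = u then monom (c - u) else 0) - (if w = v then monom (c - v) else 0))"

lemma binom_syz_syzygy:
  assumes "finite U" "u \<in> U" "v \<in> U" "mdvd u c" "mdvd v c"
  shows "binom_syz c u v \<in> syzygies U"
proof -
  have "(\<Sum>w\<in>U. binom_syz c u v w * monom w)
      = (\<Sum>w\<in>U. if w = u then monom (c - u) * monom w else 0)
        - (\<Sum>w\<in>U. if w = v then monom (c - v) * monom w else 0)"
    by (subst sum_subtractf[symmetric], rule sum.cong) (auto simp: binom_syz_def)
  also have "\<dots> = 0" using assms by (simp add: sum.delta monom_mult mdvd_diff_add)
  finally show ?thesis unfolding syzygies_def using assms by (auto simp: binom_syz_def)
qed

lemma binom_syz_linear:
  fixes U :: "('a::finite \<Rightarrow>\<^sub>0 nat) set"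
  assumes "finite U" "u \<in> U" "v \<in> U" "mdeg u = d" "mdeg v = d"
    and "mdvd u b" "mdvd v b" "mdeg b = Suc d"
  shows "binom_syz b u v \<in> linear_syzygies U"
proof -
  have "mdeg (b - u) = 1" "mdeg (b - v) = 1" using assms by (simp_all add: mdeg_diff)
  then show ?thesis using binom_syz_syzygy[OF assms(1-3,6,7)]
    unfolding linear_syzygies_def by (auto simp: binom_syz_def keys_monom)
qed

lemma monom_mult_binom_syz:
  "mdvd u b \<Longrightarrow> mdvd v b \<Longrightarrow> mdvd b c \<Longrightarrow> monom (c - b) * binom_syz b u v w = binom_syz c u v w"
  by (simp add: binom_syz_def right_diff_distrib monom_mult diff_add_diff)

text \<open>For distinct \<open>w, w'\<close> of degree \<open>d\<close> a witness \<open>b\<close> exists iff \<open>lcm w w'\<close> has degree \<open>d + 1\<close> and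
  divides \<open>c\<close>.\<close>

definition lcm_edge :: "('a \<Rightarrow>\<^sub>0 nat) set \<Rightarrow> nat \<Rightarrow> ('a \<Rightarrow>\<^sub>0 nat) \<Rightarrow> ('a \<Rightarrow>\<^sub>0 nat) \<Rightarrow> ('a \<Rightarrow>\<^sub>0 nat) \<Rightarrow> bool" where
  "lcm_edge U d c w w' \<longleftrightarrow> w \<in> U \<and> w' \<in> U \<and> mdvd w c \<and> mdvd w' c \<and>
     (w = w' \<or> (\<exists>b. mdvd b c \<and> mdeg b = Suc d \<and> mdvd w b \<and> mdvd w' b))"

definition lcm_connected :: "('a \<Rightarrow>\<^sub>0 nat) set \<Rightarrow> nat \<Rightarrow> bool" where
  "lcm_connected U d \<longleftrightarrow>
     (\<forall>u\<in>U. \<forall>v\<in>U. \<forall>c. mdvd u c \<longrightarrow> mdvd v c \<longrightarrow> (lcm_edge U d c)\<^sup>*\<^sup>* u v)"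

lemma binom_syz_in_span_if_path:
  fixes U :: "('a::finite \<Rightarrow>\<^sub>0 nat) set"
  assumes fin: "finite U" and deg: "\<forall>u\<in>U. mdeg u = d"
    and path: "(lcm_edge U d c)\<^sup>*\<^sup>* u v"
  shows "(binom_syz c u v :: _ \<Rightarrow> ('a, 'k::field) poly) \<in> linsyz_span U"
  using path
proof (induction rule: rtranclp_induct)
  case base
  have "binom_syz c u u = (\<lambda>_. 0 :: ('a, 'k) poly)" by (auto simp: binom_syz_def)
  then show ?case by (simp add: zero_in_span)
next
  case (step y z)
  have "(binom_syz c y z :: _ \<Rightarrow> ('a, 'k) poly) \<in> linsyz_span U"
  proof (cases "y = z")
    case True
    then have "binom_syz c y z = (\<lambda>_. 0 :: ('a, 'k) poly)" by (auto simp: binom_syz_def)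
    then show ?thesis by (simp add: zero_in_span)
  next
    case False
    then obtain b where b: "mdvd b c" "mdeg b = Suc d" "mdvd y b" "mdvd z b" and yz: "y \<in> U" "z \<in> U"
      using step(2) unfolding lcm_edge_def by blast
    have "binom_syz b y z \<in> linear_syzygies U"
      using fin yz deg b by (intro binom_syz_linear) auto
    then have "(\<lambda>w. monom (c - b) * binom_syz b y z w) \<in> linsyz_span U"
      by (intro mult_in_span linear_syzygy_in_span)
    then show ?thesis using b by (simp add: monom_mult_binom_syz)
  qed
  with step.IH have "(\<lambda>w. binom_syz c u y w + binom_syz c y z w :: ('a, 'k) poly) \<in> linsyz_span U"
    by (rule add_in_span)
  moreover have "(\<lambda>w. binom_syz c u y w + binom_syz c y z w) = (binom_syz c u z :: _ \<Rightarrow> ('a, 'k) poly)"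
    unfolding binom_syz_def by (rule ext) simp
  ultimately show ?case by simp
qed

lemma syzygy_coeff_sum:
  assumes "finite U" "(\<Sum>u\<in>U. \<sigma> u * monom u) = (0::('a, 'k::field) poly)"
  shows "(\<Sum>u\<in>U. if mdvd u c then Poly_Mapping.lookup (\<sigma> u) (c - u) else 0) = 0"
proof -
  have "Poly_Mapping.lookup (\<Sum>u\<in>U. \<sigma> u * monom u) c = 0" using assms(2) by simp
  then show ?thesis by (simp add: lookup_sum lookup_mult_monom)
qed

definition syz_component ::
  "('a \<Rightarrow>\<^sub>0 nat) set \<Rightarrow> (('a \<Rightarrow>\<^sub>0 nat) \<Rightarrow> ('a, 'k::field) poly) \<Rightarrow> ('a \<Rightarrow>\<^sub>0 nat) \<Rightarrow> ('a \<Rightarrow>\<^sub>0 nat) \<Rightarrow> ('a, 'k) poly" where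
  "syz_component U \<sigma> c u =
     (if u \<in> U \<and> mdvd u c then Poly_Mapping.single (c - u) (Poly_Mapping.lookup (\<sigma> u) (c - u)) else 0)"

lemma sum_syz_components:
  assumes fin: "finite U" and zero: "\<And>u. u \<notin> U \<Longrightarrow> \<sigma> u = 0"
  obtains Cs where "finite Cs" "\<And>u. \<sigma> u = (\<Sum>c\<in>Cs. syz_component U \<sigma> c u)"
proof
  define Cs where "Cs = (\<Union>u\<in>U. (\<lambda>m. m + u) ` Poly_Mapping.keys (\<sigma> u))"
  show "finite Cs" unfolding Cs_def using fin by auto
  fix u
  show "\<sigma> u = (\<Sum>c\<in>Cs. syz_component U \<sigma> c u)"
  proof (cases "u \<in> U")
    case False
    then show ?thesis by (simp add: zero syz_component_def)
  next
    case True
    define Ku where "Ku = (\<lambda>m. m + u) ` Poly_Mapping.keys (\<sigma> u)"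
    have "Ku \<subseteq> Cs" using True unfolding Ku_def Cs_def by auto
    moreover have "syz_component U \<sigma> c u = 0" if "c \<notin> Ku" for c
    proof (cases "mdvd u c")
      case True
      then have "c - u \<notin> Poly_Mapping.keys (\<sigma> u)"
        using that mdvd_diff_add[OF True] unfolding Ku_def by (metis image_eqI)
      then show ?thesis by (simp add: syz_component_def in_keys_iff)
    qed (simp add: syz_component_def)
    ultimately have "(\<Sum>c\<in>Cs. syz_component U \<sigma> c u) = (\<Sum>c\<in>Ku. syz_component U \<sigma> c u)"
      using \<open>finite Cs\<close> by (intro sum.mono_neutral_right) auto
    also have "\<dots> = (\<Sum>m\<in>Poly_Mapping.keys (\<sigma> u). syz_component U \<sigma> (m + u) u)"
      unfolding Ku_def by (subst sum.reindex) (auto intro!: inj_onI)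
    also have "\<dots> = (\<Sum>m\<in>Poly_Mapping.keys (\<sigma> u). Poly_Mapping.single m (Poly_Mapping.lookup (\<sigma> u) m))"
      using True by (simp add: syz_component_def mdvd_add_left)
    finally show ?thesis using poly_mapping_sum_single[of "\<sigma> u"] by simp
  qed
qed

text \<open>The coefficients of a component sum to zero, so it is a combination of the binomial syzygies
  joining each generator below \<open>c\<close> to a fixed one \<open>u\<^sub>0\<close>.\<close>

lemma syz_component_in_span:
  fixes U :: "('a::finite \<Rightarrow>\<^sub>0 nat) set"
  assumes fin: "finite U" and deg: "\<forall>u\<in>U. mdeg u = d" and conn: "lcm_connected U d"
    and syz: "\<sigma> \<in> syzygies U"
  shows "(syz_component U \<sigma> c :: _ \<Rightarrow> ('a, 'k::field) poly) \<in> linsyz_span U"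
proof -
  define Uc where "Uc = {u\<in>U. mdvd u c}"
  define \<alpha> where "\<alpha> u = Poly_Mapping.lookup (\<sigma> u) (c - u)" for u
  have finUc: "finite Uc" using fin unfolding Uc_def by auto
  have sum_\<alpha>: "(\<Sum>u\<in>Uc. \<alpha> u) = 0"
    using syzygy_coeff_sum[OF fin, of \<sigma> c] syz fin
    by (simp add: syzygies_def Uc_def \<alpha>_def sum.inter_filter)
  show ?thesis
  proof (cases "Uc = {}")
    case True
    then have "syz_component U \<sigma> c = (\<lambda>_. 0 :: ('a, 'k) poly)"
      by (intro ext) (auto simp: syz_component_def Uc_def)
    then show ?thesis by (simp add: zero_in_span)
  next
    case False
    then obtain u0 where u0: "u0 \<in> Uc" by blast
    have "(\<lambda>w. \<Sum>u\<in>Uc. Poly_Mapping.single 0 (\<alpha> u) * binom_syz c u u0 w) \<in> linsyz_span U"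
      using u0 conn fin deg
      by (intro sum_in_span[OF finUc] mult_in_span binom_syz_in_span_if_path)
        (auto simp: Uc_def lcm_connected_def)
    moreover have "(\<lambda>w. \<Sum>u\<in>Uc. Poly_Mapping.single 0 (\<alpha> u) * binom_syz c u u0 w) = syz_component U \<sigma> c"
    proof
      fix w
      have "(\<Sum>u\<in>Uc. Poly_Mapping.single 0 (\<alpha> u) * binom_syz c u u0 w)
          = (\<Sum>u\<in>Uc. if w = u then Poly_Mapping.single 0 (\<alpha> u) * monom (c - u) else 0)
            - (\<Sum>u\<in>Uc. if w = u0 then Poly_Mapping.single 0 (\<alpha> u) * monom (c - u0) else 0)"
        by (subst sum_subtractf[symmetric], rule sum.cong) (auto simp: binom_syz_def right_diff_distrib)
      also have "\<dots> = (if w \<in> Uc then Poly_Mapping.single 0 (\<alpha> w) * monom (c - w) else 0)"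
        using finUc sum_\<alpha> by (cases "w = u0") (simp_all add: sum.delta' flip: sum_distrib_right single_sum)
      finally show "(\<Sum>u\<in>Uc. Poly_Mapping.single 0 (\<alpha> u) * binom_syz c u u0 w) = syz_component U \<sigma> c w"
        by (simp add: syz_component_def monom_def mult_single \<alpha>_def Uc_def)
    qed
    ultimately show ?thesis by simp
  qed
qed

lemma syzygies_subset_span_if_lcm_connected:
  fixes U :: "('a::finite \<Rightarrow>\<^sub>0 nat) set"
  assumes fin: "finite U" and deg: "\<forall>u\<in>U. mdeg u = d" and conn: "lcm_connected U d"
  shows "(syzygies U :: (_ \<Rightarrow> ('a, 'k::field) poly) set) \<subseteq> linsyz_span U"
proof
  fix \<sigma> :: "_ \<Rightarrow> ('a, 'k) poly"
  assume syz: "\<sigma> \<in> syzygies U"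
  then obtain Cs where Cs: "finite Cs" "\<And>u. \<sigma> u = (\<Sum>c\<in>Cs. syz_component U \<sigma> c u)"
    using sum_syz_components[OF fin] unfolding syzygies_def by blast
  have "(\<lambda>u. \<Sum>c\<in>Cs. syz_component U \<sigma> c u) \<in> linsyz_span U"
    using Cs(1) syz_component_in_span[OF fin deg conn syz] by (rule sum_in_span)
  moreover have "(\<lambda>u. \<Sum>c\<in>Cs. syz_component U \<sigma> c u) = \<sigma>" using Cs(2) by (simp add: fun_eq_iff)
  ultimately show "\<sigma> \<in> linsyz_span U" by simp
qed

text \<open>A set \<open>C\<close> of generators below \<open>a\<close> closed under \<open>lcm_edge\<close> meets the support of a linear syzygy in
  multidegree \<open>b\<close> either fully or not at all, since all generators in that support divide the
  degree \<open>d + 1\<close> monomial \<open>b\<close> and are therefore pairwise adjacent.\<close>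

lemma coeff_sum_linear_syzygy:
  fixes U :: "('a::finite \<Rightarrow>\<^sub>0 nat) set" and \<tau> :: "_ \<Rightarrow> ('a, 'k::field) poly"
  assumes fin: "finite U" and deg: "\<forall>u\<in>U. mdeg u = d" and lin: "\<tau> \<in> linear_syzygies U"
    and CU: "C \<subseteq> U" and Ca: "\<forall>w\<in>C. mdvd w a"
    and closed: "\<forall>w\<in>C. \<forall>w'. lcm_edge U d a w w' \<longrightarrow> w' \<in> C"
    and ba: "mdvd b a"
  shows "(\<Sum>w\<in>C. if mdvd w b then Poly_Mapping.lookup (\<tau> w) (b - w) else 0) = 0"
proof -
  define g where "g w = (if mdvd w b then Poly_Mapping.lookup (\<tau> w) (b - w) else 0)" for w
  have sum_U: "(\<Sum>w\<in>U. g w) = 0"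
    using lin syzygy_coeff_sum[OF fin] unfolding g_def linear_syzygies_def syzygies_def by blast
  have support: "mdvd w b \<and> mdeg b = Suc d" if "w \<in> U" "g w \<noteq> 0" for w
  proof -
    have wb: "mdvd w b" using that unfolding g_def by (auto split: if_splits)
    then have "b - w \<in> Poly_Mapping.keys (\<tau> w)" using that unfolding g_def by (simp add: in_keys_iff)
    then have "mdeg (b - w) = 1" using lin unfolding linear_syzygies_def by blast
    then show ?thesis using wb deg that mdeg_diff[OF wb] mdeg_mono[OF wb] by simp
  qed
  show ?thesis
  proof (cases "\<exists>w0\<in>C. g w0 \<noteq> 0")
    case True
    then obtain w0 where w0: "w0 \<in> C" "g w0 \<noteq> 0" by blast
    have "w \<in> C" if "w \<in> U" "g w \<noteq> 0" for w
    proof -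
      have "lcm_edge U d a w0 w"
        unfolding lcm_edge_def using w0 CU Ca that support[OF _ w0(2)] support[OF that] ba mdvd_trans
        by blast
      then show ?thesis using closed w0 by blast
    qed
    then have "(\<Sum>w\<in>C. g w) = (\<Sum>w\<in>U. g w)"
      by (intro sum.mono_neutral_left fin CU) auto
    then show ?thesis using sum_U by (simp add: g_def)
  qed (simp add: g_def)
qed

lemma coeff_sum_mult_linear_syzygy:
  fixes U :: "('a::finite \<Rightarrow>\<^sub>0 nat) set" and \<tau> :: "_ \<Rightarrow> ('a, 'k::field) poly"
  assumes fin: "finite U" and deg: "\<forall>u\<in>U. mdeg u = d" and lin: "\<tau> \<in> linear_syzygies U"
    and CU: "C \<subseteq> U" and Ca: "\<forall>w\<in>C. mdvd w a"
    and closed: "\<forall>w\<in>C. \<forall>w'. lcm_edge U d a w w' \<longrightarrow> w' \<in> C"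
  shows "(\<Sum>w\<in>C. Poly_Mapping.lookup (p * \<tau> w) (a - w)) = 0"
proof -
  have inner: "(\<Sum>w\<in>C. if mdvd m (a - w) then Poly_Mapping.lookup (\<tau> w) (a - w - m) else 0) = 0" for m
  proof (cases "mdvd m a")
    case True
    have "(\<Sum>w\<in>C. if mdvd m (a - w) then Poly_Mapping.lookup (\<tau> w) (a - w - m) else 0)
        = (\<Sum>w\<in>C. if mdvd w (a - m) then Poly_Mapping.lookup (\<tau> w) (a - m - w) else 0)"
      using Ca True by (intro sum.cong) (auto simp: mdvd_diff_iff diff_right_commute)
    also have "\<dots> = 0"
      by (rule coeff_sum_linear_syzygy[OF fin deg lin CU Ca closed mdvd_diff_self])
    finally show ?thesis .
  next
    case False
    then have "\<not> mdvd m (a - w)" for w using mdvd_trans[OF _ mdvd_diff_self] by blast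
    then show ?thesis by simp
  qed
  have "(\<Sum>w\<in>C. Poly_Mapping.lookup (p * \<tau> w) (a - w))
      = (\<Sum>w\<in>C. \<Sum>m\<in>Poly_Mapping.keys p.
           Poly_Mapping.lookup (Poly_Mapping.single m (Poly_Mapping.lookup p m) * \<tau> w) (a - w))"
    by (subst poly_mapping_sum_single[of p]) (simp add: sum_distrib_right lookup_sum)
  also have "\<dots> = (\<Sum>m\<in>Poly_Mapping.keys p. Poly_Mapping.lookup p m *
        (\<Sum>w\<in>C. if mdvd m (a - w) then Poly_Mapping.lookup (\<tau> w) (a - w - m) else 0))"
    by (subst sum.swap) (simp add: lookup_single_mult sum_distrib_left if_distrib cong: if_cong)
  also have "\<dots> = 0" by (simp add: inner)
  finally show ?thesis .
qed

lemma coeff_sum_span: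
  fixes U :: "('a::finite \<Rightarrow>\<^sub>0 nat) set" and \<rho> :: "_ \<Rightarrow> ('a, 'k::field) poly"
  assumes fin: "finite U" and deg: "\<forall>u\<in>U. mdeg u = d" and span: "\<rho> \<in> linsyz_span U"
    and CU: "C \<subseteq> U" and Ca: "\<forall>w\<in>C. mdvd w a"
    and closed: "\<forall>w\<in>C. \<forall>w'. lcm_edge U d a w w' \<longrightarrow> w' \<in> C"
  shows "(\<Sum>w\<in>C. Poly_Mapping.lookup (\<rho> w) (a - w)) = 0"
proof -
  obtain n :: nat and c \<tau> where lin: "\<forall>i<n. \<tau> i \<in> linear_syzygies U"
    and \<rho>: "\<forall>w. \<rho> w = (\<Sum>i<n. c i * \<tau> i w)"
    using span unfolding linsyz_span_def by blast
  have "(\<Sum>w\<in>C. Poly_Mapping.lookup (\<rho> w) (a - w))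
      = (\<Sum>i<n. \<Sum>w\<in>C. Poly_Mapping.lookup (c i * \<tau> i w) (a - w))"
    using \<rho> by (simp add: lookup_sum sum.swap[where A = C])
  also have "\<dots> = 0"
    by (rule sum.neutral) (use lin coeff_sum_mult_linear_syzygy[OF fin deg _ CU Ca closed] in auto)
  finally show ?thesis .
qed

text \<open>If \<open>v\<close> is not reachable from \<open>u\<close> below \<open>a\<close>, the coefficients of the binomial syzygy of \<open>u\<close> and
  \<open>v\<close> in multidegree \<open>a\<close> sum to \<open>1\<close> over the component of \<open>u\<close>, which no element of the span allows.\<close>

lemma lcm_connected_if_syzygies_subset_span:
  fixes U :: "('a::finite \<Rightarrow>\<^sub>0 nat) set"
  assumes fin: "finite U" and deg: "\<forall>u\<in>U. mdeg u = d"
    and span: "(syzygies U :: (_ \<Rightarrow> ('a, 'k::field) poly) set) \<subseteq> linsyz_span U"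
  shows "lcm_connected U d"
  unfolding lcm_connected_def
proof (intro ballI allI impI)
  fix u v a assume uv: "u \<in> U" "v \<in> U" "mdvd u a" "mdvd v a"
  show "(lcm_edge U d a)\<^sup>*\<^sup>* u v"
  proof (rule ccontr)
    assume not_path: "\<not> (lcm_edge U d a)\<^sup>*\<^sup>* u v"
    define C where "C = {w. (lcm_edge U d a)\<^sup>*\<^sup>* u w}"
    have "w \<in> U \<and> mdvd w a" if "(lcm_edge U d a)\<^sup>*\<^sup>* u w" for w
      using that by (induction rule: rtranclp_induct) (use uv in \<open>auto simp: lcm_edge_def\<close>)
    then have CU: "C \<subseteq> U" and Ca: "\<forall>w\<in>C. mdvd w a" unfolding C_def by auto
    have closed: "\<forall>w\<in>C. \<forall>w'. lcm_edge U d a w w' \<longrightarrow> w' \<in> C"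
      unfolding C_def by (auto intro: rtranclp.rtrancl_into_rtrancl)
    have "u \<in> C" "v \<notin> C" using not_path unfolding C_def by auto
    have "(binom_syz a u v :: _ \<Rightarrow> ('a, 'k) poly) \<in> linsyz_span U"
      using span binom_syz_syzygy[OF fin uv] by blast
    then have "(\<Sum>w\<in>C. Poly_Mapping.lookup (binom_syz a u v w :: ('a, 'k) poly) (a - w)) = 0"
      by (rule coeff_sum_span[OF fin deg _ CU Ca closed])
    moreover have "(\<Sum>w\<in>C. Poly_Mapping.lookup (binom_syz a u v w :: ('a, 'k) poly) (a - w))
        = (\<Sum>w\<in>C. if w = u then 1 else 0)"
      using \<open>v \<notin> C\<close> by (intro sum.cong) (auto simp: binom_syz_def monom_def)
    moreover have "(\<Sum>w\<in>C. if w = u then 1 else 0) = (1 :: 'k)"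
      using \<open>u \<in> C\<close> finite_subset[OF CU fin] by simp
    ultimately show False by simp
  qed
qed

theorem linearly_related_iff_lcm_connected:
  fixes U :: "('a::finite \<Rightarrow>\<^sub>0 nat) set"
  assumes "finite U" and "\<forall>u\<in>U. mdeg u = d"
  shows "linearly_related U TYPE('k::field) \<longleftrightarrow> lcm_connected U d"
  using lcm_connected_if_syzygies_subset_span[where 'k = 'k] syzygies_subset_span_if_lcm_connected[where 'k = 'k] assms
  unfolding linearly_related_iff_syzygies_subset_span by blast

definition matching_sets :: "'a set set \<Rightarrow> nat \<Rightarrow> 'a set set" where
  "matching_sets E k = {\<Union>M | M. matching E M \<and> card M = k}"

text \<open>\<open>X\<close> and \<open>Y\<close> differ by exchanging at most one vertex.\<close>

definition exchange_step :: "'a set set \<Rightarrow> nat \<Rightarrow> 'a set \<Rightarrow> 'a set \<Rightarrow> 'a set \<Rightarrow> bool" where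
  "exchange_step E k Z X Y \<longleftrightarrow>
     X \<in> matching_sets E k \<and> Y \<in> matching_sets E k \<and> X \<subseteq> Z \<and> Y \<subseteq> Z \<and> card (X \<union> Y) \<le> Suc (2 * k)"

definition exchange_connected :: "'a set set \<Rightarrow> nat \<Rightarrow> bool" where
  "exchange_connected E k \<longleftrightarrow>
     (\<forall>S\<in>matching_sets E k. \<forall>T\<in>matching_sets E k. (exchange_step E k (S \<union> T))\<^sup>*\<^sup>* S T)"

lemma matching_finite: "simple_graph E \<Longrightarrow> matching E M \<Longrightarrow> finite M"
  unfolding simple_graph_def matching_def using finite_subset by blast

lemma card_Union_matching:
  assumes "simple_graph E" "matching E M" shows "card (\<Union>M) = 2 * card M"
proof -
  have "finite e" if "e \<in> M" for e
    using assms that unfolding matching_def simple_graph_def by (metis card.infinite subsetD zero_neq_numeral)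
  then have "card (\<Union>M) = sum card M"
    by (intro card_Union_disjoint) (use assms(2) in \<open>auto simp: matching_def pairwise_def disjnt_def\<close>)
  also have "\<dots> = sum (\<lambda>_. 2) M"
    by (rule sum.cong) (use assms in \<open>auto simp: matching_def simple_graph_def\<close>)
  finally show ?thesis by simp
qed

lemma card_matching_sets: "simple_graph E \<Longrightarrow> X \<in> matching_sets E k \<Longrightarrow> card X = 2 * k"
  unfolding matching_sets_def using card_Union_matching by blast

lemma matching_Diff_edge:
  "matching E M \<Longrightarrow> g \<in> M \<Longrightarrow> matching E (M - {g}) \<and> \<Union>(M - {g}) = \<Union>M - g"
  unfolding matching_def by blast

lemma matching_insert_edge:
  assumes "simple_graph E" "matching E M" "g \<in> E" "g \<inter> \<Union>M = {}"
  shows "matching E (insert g M) \<and> card (insert g M) = Suc (card M) \<and> \<Union>(insert g M) = g \<union> \<Union>M"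
proof -
  have "g \<noteq> {}" using assms(1,3) unfolding simple_graph_def by fastforce
  then have "g \<notin> M" using assms(4) by blast
  then show ?thesis using assms matching_finite[OF assms(1,2)] unfolding matching_def by auto
qed

lemma Union_Diff_edge_in_matching_sets:
  assumes "simple_graph E" "matching E M" "card M = Suc k" "g \<in> M"
  shows "\<Union>M - g \<in> matching_sets E k"
proof -
  have "card (M - {g}) = k" using assms matching_finite by simp
  then show ?thesis using matching_Diff_edge[OF assms(2,4)] unfolding matching_sets_def by auto
qed

lemma Un_edge_in_matching_sets:
  assumes "simple_graph E" "X \<in> matching_sets E k" "g \<in> E" "g \<inter> X = {}"
  shows "X \<union> g \<in> matching_sets E (Suc k)"
proof -
  obtain M where M: "matching E M" "card M = k" "X = \<Union>M"
    using assms(2) unfolding matching_sets_def by blast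
  then show ?thesis using matching_insert_edge[OF assms(1) M(1) assms(3)] assms(4)
    unfolding matching_sets_def by (auto intro!: exI[of _ "insert g M"])
qed

lemma exchange_path_mono:
  "(exchange_step E k Z)\<^sup>*\<^sup>* A B \<Longrightarrow> Z \<subseteq> Z' \<Longrightarrow> (exchange_step E k Z')\<^sup>*\<^sup>* A B"
  by (erule rtranclp_mono[THEN predicate2D, rotated]) (unfold exchange_step_def, blast)

lemma exchange_path_Un_edge:
  fixes E :: "('a::finite) set set"
  assumes sg: "simple_graph E" and path: "(exchange_step E k Z)\<^sup>*\<^sup>* A B"
    and g: "g \<in> E" "g \<inter> Z = {}"
  shows "(exchange_step E (Suc k) (Z \<union> g))\<^sup>*\<^sup>* (A \<union> g) (B \<union> g)"
  using path
proof (induction rule: rtranclp_induct)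
  case (step Y Y')
  have Y: "Y \<in> matching_sets E k" "Y' \<in> matching_sets E k" "Y \<subseteq> Z" "Y' \<subseteq> Z"
    "card (Y \<union> Y') \<le> Suc (2 * k)"
    using step(2) unfolding exchange_step_def by auto
  have "card ((Y \<union> g) \<union> (Y' \<union> g)) = card (Y \<union> Y') + card g"
    using Y g by (subst card_Un_disjoint[symmetric]) (auto intro: arg_cong[where f = card])
  moreover have "card g = 2" using sg g unfolding simple_graph_def by auto
  ultimately have "exchange_step E (Suc k) (Z \<union> g) (Y \<union> g) (Y' \<union> g)"
    unfolding exchange_step_def
    using Y g Un_edge_in_matching_sets[OF sg Y(1) g(1)] Un_edge_in_matching_sets[OF sg Y(2) g(1)] by auto
  then show ?case by (rule rtranclp.rtrancl_into_rtrancl[OF step(3)])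
qed simp

lemma exchange_path_common_edge:
  fixes E :: "('a::finite) set set"
  assumes sg: "simple_graph E" and conn: "exchange_connected E k"
    and M: "matching E M" "card M = Suc k" and N: "matching E N" "card N = Suc k"
    and g: "g \<in> M" "g \<in> N"
  shows "(exchange_step E (Suc k) (\<Union>M \<union> \<Union>N))\<^sup>*\<^sup>* (\<Union>M) (\<Union>N)"
proof -
  define A where "A = \<Union>M - g"
  define B where "B = \<Union>N - g"
  have "A \<in> matching_sets E k" "B \<in> matching_sets E k"
    unfolding A_def B_def using Union_Diff_edge_in_matching_sets sg M N g by blast+
  then have "(exchange_step E k (A \<union> B))\<^sup>*\<^sup>* A B" using conn unfolding exchange_connected_def by blast
  moreover have "g \<in> E" using M g unfolding matching_def by blast
  moreover have "g \<inter> (A \<union> B) = {}" unfolding A_def B_def by blast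
  ultimately have "(exchange_step E (Suc k) (A \<union> B \<union> g))\<^sup>*\<^sup>* (A \<union> g) (B \<union> g)"
    by (intro exchange_path_Un_edge[OF sg])
  moreover have "A \<union> g = \<Union>M" "B \<union> g = \<Union>N" "A \<union> B \<union> g = \<Union>M \<union> \<Union>N"
    using g unfolding A_def B_def by blast+
  ultimately show ?thesis by simp
qed

lemma edge_trace_in_edge:
  assumes "card e = 2" "\<not> e \<subseteq> \<Union>N" "N \<noteq> {}"
  obtains f where "f \<in> N" "e \<inter> \<Union>N \<subseteq> f"
proof -
  obtain x y where e: "e = {x, y}" using card_2_iff[THEN iffD1, OF assms(1)] by blast
  then obtain p where p: "e \<inter> \<Union>N \<subseteq> {p}" using assms(2) by auto
  show ?thesis
  proof (cases "p \<in> \<Union>N")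
    case True
    then obtain f where "f \<in> N" "p \<in> f" by blast
    then show ?thesis using p that by blast
  next
    case False
    then have "e \<inter> \<Union>N = {}" using p by blast
    moreover obtain f where "f \<in> N" using assms(3) by blast
    ultimately show ?thesis using that by blast
  qed
qed

text \<open>Given \<open>S \<noteq> T\<close>, pick an edge \<open>e\<close> of the matching of \<open>S\<close> not inside \<open>T\<close> and an edge \<open>f\<close> of the
  matching of \<open>T\<close> containing \<open>e \<inter> T\<close>. Replacing \<open>f\<close> by \<open>e\<close> yields a \<open>(k+1)\<close>-matching inside \<open>S \<union> T\<close>
  sharing \<open>e\<close> with \<open>S\<close> and, since \<open>k \<ge> 1\<close>, some other edge with \<open>T\<close>.\<close>

theorem exchange_connected_Suc:
  fixes E :: "('a::finite) set set"
  assumes sg: "simple_graph E" and k: "1 \<le> k" and conn: "exchange_connected E k"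
  shows "exchange_connected E (Suc k)"
  unfolding exchange_connected_def
proof (intro ballI)
  fix S T assume S: "S \<in> matching_sets E (Suc k)" and T: "T \<in> matching_sets E (Suc k)"
  obtain M where M: "matching E M" "card M = Suc k" "S = \<Union>M" using S unfolding matching_sets_def by blast
  obtain N where N: "matching E N" "card N = Suc k" "T = \<Union>N" using T unfolding matching_sets_def by blast
  show "(exchange_step E (Suc k) (S \<union> T))\<^sup>*\<^sup>* S T"
  proof (cases "S \<subseteq> T")
    case True
    then have "S = T" using card_matching_sets[OF sg S] card_matching_sets[OF sg T] by (simp add: card_subset_eq)
    then show ?thesis by simp
  next
    case False
    then obtain e where e: "e \<in> M" "\<not> e \<subseteq> T" using M(3) by blast
    have eE: "e \<in> E" "card e = 2" using e M sg unfolding matching_def simple_graph_def by auto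
    have "N \<noteq> {}" using N(2) by auto
    then obtain f where f: "f \<in> N" "e \<inter> T \<subseteq> f"
      using edge_trace_in_edge[OF eE(2)] e(2) unfolding N(3) by blast
    have N_f: "matching E (N - {f})" "\<Union>(N - {f}) = T - f" "card (N - {f}) = k"
      using matching_Diff_edge[OF N(1) f(1)] N matching_finite[OF sg N(1)] f(1) by auto
    define N' where "N' = insert e (N - {f})"
    have "e \<inter> \<Union>(N - {f}) = {}" using f(2) N_f(2) by blast
    then have N': "matching E N'" "card N' = Suc k" "\<Union>N' = e \<union> (T - f)"
      using matching_insert_edge[OF sg N_f(1) eE(1)] N_f unfolding N'_def by auto
    have "N - {f} \<noteq> {}" using k N_f(3) by (intro notI) simp
    then obtain g where g: "g \<in> N" "g \<noteq> f" by blast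
    have "e \<in> N'" "g \<in> N'" using g unfolding N'_def by auto
    have "(exchange_step E (Suc k) (S \<union> \<Union>N'))\<^sup>*\<^sup>* S (\<Union>N')"
      using exchange_path_common_edge[OF sg conn M(1,2) N'(1,2) e(1) \<open>e \<in> N'\<close>] unfolding M(3) .
    then have "(exchange_step E (Suc k) (S \<union> T))\<^sup>*\<^sup>* S (\<Union>N')"
      by (rule exchange_path_mono) (use N'(3) M(3) e(1) in blast)
    moreover have "(exchange_step E (Suc k) (\<Union>N' \<union> T))\<^sup>*\<^sup>* (\<Union>N') T"
      using exchange_path_common_edge[OF sg conn N'(1,2) N(1,2) \<open>g \<in> N'\<close> g(1)] unfolding N(3) .
    then have "(exchange_step E (Suc k) (S \<union> T))\<^sup>*\<^sup>* (\<Union>N') T"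
      by (rule exchange_path_mono) (use N'(3) M(3) e(1) in blast)
    ultimately show ?thesis by (rule rtranclp_trans)
  qed
qed

lemma lookup_vexp: "Poly_Mapping.lookup (vexp A) x = (if x \<in> A then 1 else 0)" for A :: "'a::finite set"
  unfolding vexp_def by (simp add: lookup_sum lookup_single when_def)

lemma vexp_inject: "vexp A = vexp B \<longleftrightarrow> A = B" for A B :: "'a::finite set"
  by (metis lookup_vexp one_neq_zero subsetI subset_antisym)

lemma mdeg_vexp: "mdeg (vexp A) = card A" for A :: "'a::finite set"
  by (simp add: mdeg_eq_sum_UNIV lookup_vexp sum.If_cases)

lemma mdvd_vexp_iff: "mdvd (vexp A) m \<longleftrightarrow> (\<forall>x\<in>A. 1 \<le> Poly_Mapping.lookup m x)" for A :: "'a::finite set"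
  unfolding mdvd_def lookup_vexp by auto

lemma sqf_power_gens_eq:
  fixes E :: "('a::finite) set set"
  assumes "simple_graph E"
  shows "sqf_power_gens E k = vexp ` matching_sets E k"
proof -
  have sum_vexp: "(\<Sum>e\<in>M. vexp e) = vexp (\<Union>M)" if "matching E M" for M
    unfolding vexp_def
    by (subst sum.Union_disjoint) (use assms that matching_finite in \<open>auto simp: matching_def\<close>)
  show ?thesis
    unfolding sqf_power_gens_def matching_sets_def by (auto simp: sum_vexp image_iff) (metis sum_vexp)+
qed

lemma exchange_path_if_lcm_path:
  fixes E :: "('a::finite) set set"
  assumes sg: "simple_graph E" and S: "S \<in> matching_sets E k"
    and path: "(lcm_edge (vexp ` matching_sets E k) (2 * k) (vexp S + vexp T))\<^sup>*\<^sup>* (vexp S) (vexp T)"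
  shows "(exchange_step E k (S \<union> T))\<^sup>*\<^sup>* S T"
proof -
  have "(exchange_step E k (S \<union> T))\<^sup>*\<^sup>* S W"
    if "(lcm_edge (vexp ` matching_sets E k) (2 * k) (vexp S + vexp T))\<^sup>*\<^sup>* (vexp S) (vexp W)" for W
    using that
  proof (induction "vexp W" arbitrary: W rule: rtranclp_induct)
    case base
    then show ?case by (simp add: vexp_inject)
  next
    case (step y W)
    obtain Y where Y: "y = vexp Y" "Y \<in> matching_sets E k"
      using step(2) unfolding lcm_edge_def by blast
    have W: "W \<in> matching_sets E k" using step(2) unfolding lcm_edge_def by (auto simp: vexp_inject)
    have YW_below: "mdvd (vexp Y) (vexp S + vexp T)" "mdvd (vexp W) (vexp S + vexp T)"
      and common: "y = vexp W \<or> (\<exists>b. mdeg b = Suc (2 * k) \<and> mdvd y b \<and> mdvd (vexp W) b)"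
      using step(2) unfolding lcm_edge_def Y(1) by blast+
    have sub: "X \<subseteq> S \<union> T" if "mdvd (vexp X) (vexp S + vexp T)" for X
      using that unfolding mdvd_vexp_iff by (auto simp: lookup_add lookup_vexp split: if_splits)
    have "card (Y \<union> W) \<le> Suc (2 * k)"
      using common
    proof
      assume "y = vexp W"
      then show ?thesis using Y W card_matching_sets[OF sg] by (simp add: vexp_inject)
    next
      assume "\<exists>b. mdeg b = Suc (2 * k) \<and> mdvd y b \<and> mdvd (vexp W) b"
      then obtain b where "mdeg b = Suc (2 * k)" "mdvd (vexp (Y \<union> W)) b"
        unfolding Y(1) mdvd_vexp_iff by blast
      then show ?thesis using mdeg_mono mdeg_vexp by metis
    qed
    then have "exchange_step E k (S \<union> T) Y W"
      unfolding exchange_step_def using Y W sub YW_below by auto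
    then show ?case using step(3)[OF Y(1)] by (rule rtranclp.rtrancl_into_rtrancl[rotated])
  qed
  then show ?thesis using path by blast
qed

lemma lcm_path_if_exchange_path:
  fixes E :: "('a::finite) set set"
  assumes sg: "simple_graph E" and path: "(exchange_step E k Z)\<^sup>*\<^sup>* S T"
    and S: "S \<in> matching_sets E k" and Zc: "\<forall>x\<in>Z. 1 \<le> Poly_Mapping.lookup c x"
  shows "(lcm_edge (vexp ` matching_sets E k) (2 * k) c)\<^sup>*\<^sup>* (vexp S) (vexp T)"
  using path
proof (induction rule: rtranclp_induct)
  case (step Y Y')
  have Y: "Y \<in> matching_sets E k" "Y' \<in> matching_sets E k" "Y \<subseteq> Z" "Y' \<subseteq> Z"
    "card (Y \<union> Y') \<le> Suc (2 * k)"
    using step(2) unfolding exchange_step_def by auto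
  have below_c: "mdvd (vexp X) c" if "X \<subseteq> Z" for X
    using that Zc unfolding mdvd_vexp_iff by blast
  have "lcm_edge (vexp ` matching_sets E k) (2 * k) c (vexp Y) (vexp Y')"
  proof (cases "Y = Y'")
    case False
    have "card Y = 2 * k" "card Y' = 2 * k" using card_matching_sets[OF sg] Y by auto
    then have "card Y < card (Y \<union> Y')"
      using False by (metis Un_upper1 card_subset_eq finite psubset_card_mono psubsetI sup.absorb_iff1 sup_commute)
    then have "mdeg (vexp (Y \<union> Y')) = Suc (2 * k)"
      using Y(5) \<open>card Y = 2 * k\<close> by (simp add: mdeg_vexp)
    moreover have "mdvd (vexp Y) (vexp (Y \<union> Y'))" "mdvd (vexp Y') (vexp (Y \<union> Y'))"
      by (auto simp: mdvd_vexp_iff lookup_vexp)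
    ultimately show ?thesis unfolding lcm_edge_def using Y below_c[of "Y \<union> Y'"] below_c by blast
  qed (use Y below_c in \<open>auto simp: lcm_edge_def\<close>)
  then show ?case by (rule rtranclp.rtrancl_into_rtrancl[OF step(3)])
qed simp

text \<open>For generators of the form \<open>x\<^sub>S\<close> it suffices to test \<open>c = x\<^sub>S x\<^sub>T\<close>: a path below it passes through
  squarefree monomials only, i.e. through subsets of \<open>S \<union> T\<close>.\<close>

lemma lcm_connected_iff_exchange_connected:
  fixes E :: "('a::finite) set set"
  assumes sg: "simple_graph E"
  shows "lcm_connected (vexp ` matching_sets E k) (2 * k) \<longleftrightarrow> exchange_connected E k"
proof
  assume "lcm_connected (vexp ` matching_sets E k) (2 * k)"
  then show "exchange_connected E k"
    unfolding lcm_connected_def exchange_connected_def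
    by (auto intro!: exchange_path_if_lcm_path[OF sg] simp: mdvd_def lookup_add)
next
  assume conn: "exchange_connected E k"
  show "lcm_connected (vexp ` matching_sets E k) (2 * k)"
    unfolding lcm_connected_def
  proof (intro ballI allI impI)
    fix u v c
    assume "u \<in> vexp ` matching_sets E k" "v \<in> vexp ` matching_sets E k" "mdvd u c" "mdvd v c"
    moreover obtain S T where "S \<in> matching_sets E k" "T \<in> matching_sets E k" "u = vexp S" "v = vexp T"
      using \<open>u \<in> _\<close> \<open>v \<in> _\<close> by blast
    ultimately have "\<forall>x\<in>S \<union> T. 1 \<le> Poly_Mapping.lookup c x"
      by (auto simp: mdvd_vexp_iff)
    with \<open>S \<in> _\<close> \<open>T \<in> _\<close> \<open>u = _\<close> \<open>v = _\<close> show "(lcm_edge (vexp ` matching_sets E k) (2 * k) c)\<^sup>*\<^sup>* u v"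
      using conn lcm_path_if_exchange_path[OF sg] unfolding exchange_connected_def by blast
  qed
qed

theorem theorem3p1:
  fixes E :: "('a::finite) set set" and k :: nat
  assumes "simple_graph E"
    and "1 \<le> k" and "k < matching_number E"
    and "linearly_related (sqf_power_gens E k) TYPE('k::field)"
  shows "linearly_related (sqf_power_gens E (Suc k)) TYPE('k::field)"
proof -
  have "linearly_related (sqf_power_gens E j) TYPE('k) \<longleftrightarrow> exchange_connected E j" for j
  proof -
    have "\<forall>u\<in>vexp ` matching_sets E j. mdeg u = 2 * j"
      using card_matching_sets[OF assms(1)] by (auto simp: mdeg_vexp)
    then have "linearly_related (vexp ` matching_sets E j) TYPE('k) \<longleftrightarrow>
        lcm_connected (vexp ` matching_sets E j) (2 * j)"
      by (intro linearly_related_iff_lcm_connected) simp_all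
    then show ?thesis
      unfolding sqf_power_gens_eq[OF assms(1)] lcm_connected_iff_exchange_connected[OF assms(1)] .
  qed
  then show ?thesis using exchange_connected_Suc[OF assms(1,2)] assms(4) by blast
qed

end
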